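(* There is no embedding $\mathcal{B}^X \hookrightarrow \mathcal{K}_2^X$ for any $X \subseteq \omega$.
   Context: A partial combinatory algebra (pca) is a set $A$ with a partial binary application $\cdot$ containing distinct elements $\mathrm{s},\mathrm{k}$ with $\mathrm{k}ab\downarrow = a$, $\mathrm{s}ab\downarrow$, and $\mathrm{s}abc \simeq (ac)(bc)$. Given pcas $\mathcal{A},\mathcal{B}$, an embedding $\mathcal{A}\hookrightarrow\mathcal{B}$ is an injection $f$ such that whenever $aa'\downarrow$ in $\mathcal{A}$, $f(a)f(a')\downarrow = f(aa')$. Kleene's second model $\mathcal{K}_2$ is taken with carrier $\omega^\omega$ and application $g\cdot h = \Phi^{g\oplus h}_{g(0)}$, where $\Phi_e$ is the $e$-th Turing functional and $g\cdot h$ is defined iff the function on the right is total. Van Oosten's sequential computation model $\mathcal{B}$ is the same definition but with carrier the set of partial functions $\omega\rightharpoonup\omega$ (application always defined). For $X\subseteq\omega$, $\mathcal{K}_2^X$ is the sub-pca of $X$-computable total functions and $\mathcal{B}^X$ the sub-pca of partial $X$-computable functions. *)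

theory Defs
  imports Main "HOL-Library.Nat_Bijection"
begin

text \<open>Programs are coded by natural numbers; the code e is decoded via e mod 9
(the instruction) and prod_decode (e div 9) (sub-programs).  The instructions
generate exactly the unary functions partial recursive relative to a (partial)
oracle O :: nat \<Rightarrow> nat option, with the sequential convention that querying the
oracle at a point where it is undefined diverges.
  0: zero, 1: successor, 2: first projection of a pair code, 3: second projection,
  4: oracle query, 5: composition, 6: pairing, 7: primitive recursion,
  8: minimisation.\<close>

inductive comp :: "(nat \<Rightarrow> nat option) \<Rightarrow> nat \<Rightarrow> nat \<Rightarrow> nat \<Rightarrow> bool" for Or where
  c_zero: "e mod 9 = 0 \<Longrightarrow> comp Or e x 0"
| c_succ: "e mod 9 = 1 \<Longrightarrow> comp Or e x (Suc x)"
| c_fst:  "e mod 9 = 2 \<Longrightarrow> comp Or e x (fst (prod_decode x))"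
| c_snd:  "e mod 9 = 3 \<Longrightarrow> comp Or e x (snd (prod_decode x))"
| c_orc:  "e mod 9 = 4 \<Longrightarrow> Or x = Some y \<Longrightarrow> comp Or e x y"
| c_comp: "e mod 9 = 5 \<Longrightarrow> prod_decode (e div 9) = (a, b) \<Longrightarrow>
             comp Or b x z \<Longrightarrow> comp Or a z y \<Longrightarrow> comp Or e x y"
| c_pair: "e mod 9 = 6 \<Longrightarrow> prod_decode (e div 9) = (a, b) \<Longrightarrow>
             comp Or a x y1 \<Longrightarrow> comp Or b x y2 \<Longrightarrow> comp Or e x (prod_encode (y1, y2))"
| c_prim0: "e mod 9 = 7 \<Longrightarrow> prod_decode (e div 9) = (a, b) \<Longrightarrow>
             prod_decode x = (0, w) \<Longrightarrow> comp Or a w y \<Longrightarrow> comp Or e x y"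
| c_primS: "e mod 9 = 7 \<Longrightarrow> prod_decode (e div 9) = (a, b) \<Longrightarrow>
             prod_decode x = (Suc k, w) \<Longrightarrow> comp Or e (prod_encode (k, w)) z \<Longrightarrow>
             comp Or b (prod_encode (k, prod_encode (z, w))) y \<Longrightarrow> comp Or e x y"
| c_mu:   "e mod 9 = 8 \<Longrightarrow> comp Or (e div 9) (prod_encode (k, x)) 0 \<Longrightarrow>
             (\<forall>j<k. \<exists>v. 0 < v \<and> comp Or (e div 9) (prod_encode (j, x)) v) \<Longrightarrow>
             comp Or e x k"

definition Phi :: "nat \<Rightarrow> (nat \<Rightarrow> nat option) \<Rightarrow> nat \<Rightarrow> nat option" where
  "Phi e Or x = (if \<exists>y. comp Or e x y then Some (THE y. comp Or e x y) else None)"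

definition join :: "(nat \<Rightarrow> nat option) \<Rightarrow> (nat \<Rightarrow> nat option) \<Rightarrow> nat \<Rightarrow> nat option" where
  "join g h n = (if even n then g (n div 2) else h (n div 2))"

definition K2_app :: "(nat \<Rightarrow> nat) \<Rightarrow> (nat \<Rightarrow> nat) \<Rightarrow> (nat \<Rightarrow> nat) option" where
  "K2_app g h =
     (let F = Phi (g 0) (join (Some \<circ> g) (Some \<circ> h))
      in if (\<forall>n. F n \<noteq> None) then Some (\<lambda>n. the (F n)) else None)"

definition B_app :: "(nat \<Rightarrow> nat option) \<Rightarrow> (nat \<Rightarrow> nat option) \<Rightarrow> (nat \<Rightarrow> nat option) option" where
  "B_app g h = Some (case g 0 of None \<Rightarrow> (\<lambda>_. None) | Some e \<Rightarrow> Phi e (join g h))"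

definition chi :: "nat set \<Rightarrow> nat \<Rightarrow> nat option" where
  "chi X n = Some (if n \<in> X then 1 else 0)"

definition K2_X :: "nat set \<Rightarrow> (nat \<Rightarrow> nat) set" where
  "K2_X X = {f. \<exists>e. Phi e (chi X) = Some \<circ> f}"

definition B_X :: "nat set \<Rightarrow> (nat \<Rightarrow> nat option) set" where
  "B_X X = {f. \<exists>e. Phi e (chi X) = f}"

definition sub_app :: "'a set \<Rightarrow> ('a \<Rightarrow> 'a \<Rightarrow> 'a option) \<Rightarrow> 'a \<Rightarrow> 'a \<Rightarrow> 'a option" where
  "sub_app C app a b = (case app a b of None \<Rightarrow> None | Some c \<Rightarrow> if c \<in> C then Some c else None)"

definition pca_embedding ::
  "'a set \<Rightarrow> ('a \<Rightarrow> 'a \<Rightarrow> 'a option) \<Rightarrow> 'b set \<Rightarrow> ('b \<Rightarrow> 'b \<Rightarrow> 'b option) \<Rightarrow> ('a \<Rightarrow> 'b) \<Rightarrow> bool" where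
  "pca_embedding A appA B appB f \<longleftrightarrow>
     inj_on f A \<and> f ` A \<subseteq> B \<and>
     (\<forall>a\<in>A. \<forall>a'\<in>A. \<forall>c. appA a a' = Some c \<longrightarrow> appB (f a) (f a') = Some (f c))"

end

theory Submission
  imports Defs
begin

text \<open>Suppose \<open>f\<close> embeds \<open>\<B>\<^sup>X\<close> into \<open>\<K>\<^sub>2\<^sup>X\<close>. Let \<open>a = \<Phi>\<^sub>d(const d \<oplus> \<chi>\<^sub>X)\<close>, where
  \<open>d\<close>, read by the program from its own oracle, searches for a certificate that the
  \<open>\<K>\<^sub>2\<close>-application \<open>f(const d) \<cdot> f(\<chi>\<^sub>X)\<close> differs from \<open>f(const 0)\<close>: \<open>a\<close> is constantly
  \<open>0\<close> if such a certificate exists and nowhere defined otherwise. As \<open>const d\<close> is obtained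
  from \<open>const 0\<close> by \<open>d\<close> applications of a successor element of \<open>\<B>\<close>, the functions
  involved are computed relative to a hierarchy of oracles built from \<open>\<chi>\<^sub>X\<close> by joins of
  \<open>\<K>\<^sub>2\<close>-applications, and such computations have finite derivations that a loop-free
  program with oracle \<open>\<chi>\<^sub>X\<close> can check. Since \<open>f\<close> preserves application,
  \<open>f(const d) \<cdot> f(\<chi>\<^sub>X) = f(a)\<close>, so by injectivity \<open>a \<noteq> const 0\<close> iff \<open>a\<close> is defined,
  a contradiction.\<close>

section \<open>Computations relative to a partial oracle\<close>

lemma comp_zero_inv: "Defs.comp Or e x y \<Longrightarrow> e mod 9 = 0 \<Longrightarrow> y = 0"
  by (erule comp.cases) simp_all

lemma comp_succ_inv: "Defs.comp Or e x y \<Longrightarrow> e mod 9 = 1 \<Longrightarrow> y = Suc x"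
  by (erule comp.cases) simp_all

lemma comp_fst_inv: "Defs.comp Or e x y \<Longrightarrow> e mod 9 = 2 \<Longrightarrow> y = fst (prod_decode x)"
  by (erule comp.cases) simp_all

lemma comp_snd_inv: "Defs.comp Or e x y \<Longrightarrow> e mod 9 = 3 \<Longrightarrow> y = snd (prod_decode x)"
  by (erule comp.cases) simp_all

lemma comp_orc_inv: "Defs.comp Or e x y \<Longrightarrow> e mod 9 = 4 \<Longrightarrow> Or x = Some y"
  by (erule comp.cases) simp_all

lemma comp_comp_inv:
  "Defs.comp Or e x y \<Longrightarrow> e mod 9 = 5 \<Longrightarrow> prod_decode (e div 9) = (a, b) \<Longrightarrow>
    \<exists>z. Defs.comp Or b x z \<and> Defs.comp Or a z y"
  by (erule comp.cases) auto

lemma comp_pair_inv: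
  "Defs.comp Or e x y \<Longrightarrow> e mod 9 = 6 \<Longrightarrow> prod_decode (e div 9) = (a, b) \<Longrightarrow>
    \<exists>y1 y2. y = prod_encode (y1, y2) \<and> Defs.comp Or a x y1 \<and> Defs.comp Or b x y2"
  by (erule comp.cases) auto

lemma comp_prim0_inv:
  "Defs.comp Or e x y \<Longrightarrow> e mod 9 = 7 \<Longrightarrow> prod_decode (e div 9) = (a, b) \<Longrightarrow>
    prod_decode x = (0, w) \<Longrightarrow> Defs.comp Or a w y"
  by (erule comp.cases) simp_all

lemma comp_primS_inv:
  "Defs.comp Or e x y \<Longrightarrow> e mod 9 = 7 \<Longrightarrow> prod_decode (e div 9) = (a, b) \<Longrightarrow>
    prod_decode x = (Suc k, w) \<Longrightarrow>
    \<exists>z. Defs.comp Or e (prod_encode (k, w)) z \<and>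
        Defs.comp Or b (prod_encode (k, prod_encode (z, w))) y"
  by (erule comp.cases) auto

lemma comp_mu_inv:
  "Defs.comp Or e x y \<Longrightarrow> e mod 9 = 8 \<Longrightarrow>
    Defs.comp Or (e div 9) (prod_encode (y, x)) 0 \<and>
    (\<forall>j<y. \<exists>v>0. Defs.comp Or (e div 9) (prod_encode (j, x)) v)"
  by (erule comp.cases) simp_all

lemma comp_functional: "Defs.comp Or e x y \<Longrightarrow> Defs.comp Or e x y' \<Longrightarrow> y' = y"
proof (induction arbitrary: y' rule: comp.induct)
  case (c_mu e k x)
  from c_mu.prems comp_mu_inv c_mu.hyps(1)
  have y': "Defs.comp Or (e div 9) (prod_encode (y', x)) 0"
    and below_y': "\<forall>j<y'. \<exists>v>0. Defs.comp Or (e div 9) (prod_encode (j, x)) v"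
    by blast+
  show ?case
  proof (rule linorder_cases[of k y'])
    assume "k < y'"
    with below_y' c_mu.IH(1) show ?thesis by blast
  next
    assume "y' < k"
    with y' c_mu.IH(2) show ?thesis by fastforce
  qed simp
next
  case (c_comp e a b x z y)
  from comp_comp_inv[OF c_comp.prems c_comp.hyps(1,2)] c_comp.IH show ?case by blast
next
  case (c_pair e a b x y1 y2)
  from comp_pair_inv[OF c_pair.prems c_pair.hyps(1,2)] c_pair.IH show ?case by blast
next
  case (c_prim0 e a b x w y)
  from comp_prim0_inv[OF c_prim0.prems c_prim0.hyps(1,2,3)] c_prim0.IH show ?case by blast
next
  case (c_primS e a b x k w z y)
  from comp_primS_inv[OF c_primS.prems c_primS.hyps(1,2,3)] c_primS.IH show ?case by blast
qed (auto dest: comp_zero_inv comp_succ_inv comp_fst_inv comp_snd_inv comp_orc_inv)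

lemma Phi_eq_Some_iff: "Phi e Or x = Some y \<longleftrightarrow> Defs.comp Or e x y"
  unfolding Phi_def using comp_functional by (auto intro: theI the_equality)

lemma Phi_eq_None_iff: "Phi e Or x = None \<longleftrightarrow> (\<nexists>y. Defs.comp Or e x y)"
  by (simp add: Phi_def)

lemma Phi_eq_total_iff: "Phi e Or = Some \<circ> r \<longleftrightarrow> (\<forall>x. Defs.comp Or e x (r x))"
  by (simp add: fun_eq_iff Phi_eq_Some_iff)

section \<open>Loop-free programs\<close>

datatype prog = PZero | PSucc | PFst | PSnd | POracle
  | PComp prog prog | PPair prog prog | PRec prog prog

primrec eval :: "(nat \<Rightarrow> nat) \<Rightarrow> prog \<Rightarrow> nat \<Rightarrow> nat" where
  "eval g PZero x = 0"
| "eval g PSucc x = Suc x"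
| "eval g PFst x = fst (prod_decode x)"
| "eval g PSnd x = snd (prod_decode x)"
| "eval g POracle x = g x"
| "eval g (PComp p q) x = eval g p (eval g q x)"
| "eval g (PPair p q) x = prod_encode (eval g p x, eval g q x)"
| "eval g (PRec p q) x = rec_nat (eval g p (snd (prod_decode x)))
     (\<lambda>i r. eval g q (prod_encode (i, prod_encode (r, snd (prod_decode x))))) (fst (prod_decode x))"

primrec code :: "prog \<Rightarrow> nat" where
  "code PZero = 0"
| "code PSucc = 1"
| "code PFst = 2"
| "code PSnd = 3"
| "code POracle = 4"
| "code (PComp p q) = 5 + 9 * prod_encode (code p, code q)"
| "code (PPair p q) = 6 + 9 * prod_encode (code p, code q)"
| "code (PRec p q) = 7 + 9 * prod_encode (code p, code q)"

lemma comp_code_PRec: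
  assumes p: "\<And>x. Defs.comp (\<lambda>a. Some (g a)) (code p) x (eval g p x)"
    and q: "\<And>x. Defs.comp (\<lambda>a. Some (g a)) (code q) x (eval g q x)"
  shows "Defs.comp (\<lambda>a. Some (g a)) (code (PRec p q)) x (eval g (PRec p q) x)"
proof -
  have instr: "code (PRec p q) mod 9 = 7" "prod_decode (code (PRec p q) div 9) = (code p, code q)"
    by simp_all
  obtain k w where x: "prod_decode x = (k, w)" by fastforce
  then show ?thesis
  proof (induction k arbitrary: x)
    case 0
    from c_prim0[OF instr 0 p] show ?case using 0 by simp
  next
    case (Suc k)
    from Suc.IH[of "prod_encode (k, w)"]
    have "Defs.comp (\<lambda>a. Some (g a)) (code (PRec p q)) (prod_encode (k, w))
            (eval g (PRec p q) (prod_encode (k, w)))" by simp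
    from c_primS[OF instr Suc.prems this q] show ?case using Suc.prems by simp
  qed
qed

lemma comp_code_eval: "Defs.comp (\<lambda>a. Some (g a)) (code p) x (eval g p x)"
proof (induction p arbitrary: x)
  case (PComp p q)
  show ?case
    by (simp only: eval.simps, rule c_comp[where a="code p" and b="code q" and z="eval g q x"])
      (simp_all add: PComp.IH)
next
  case (PPair p q)
  show ?case
    by (simp only: eval.simps, rule c_pair[where a="code p" and b="code q"])
      (simp_all add: PPair.IH)
next
  case (PRec p q)
  then show ?case by (rule comp_code_PRec)
qed (simp_all add: comp.intros)

lemma comp_code_iff: "Defs.comp (\<lambda>a. Some (g a)) (code p) x y \<longleftrightarrow> y = eval g p x"
  using comp_code_eval comp_functional by blast

lemma Phi_code: "Phi (code p) (\<lambda>a. Some (g a)) = (\<lambda>x. Some (eval g p x))"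
  by (simp add: fun_eq_iff Phi_eq_Some_iff comp_code_iff)

definition "PId = PPair PFst PSnd"

lemma eval_PId [simp]: "eval g PId x = x"
  by (simp add: PId_def)

primrec PConst :: "nat \<Rightarrow> prog" where
  "PConst 0 = PZero"
| "PConst (Suc n) = PComp PSucc (PConst n)"

lemma eval_PConst [simp]: "eval g (PConst n) x = n"
  by (induction n) auto

definition "FST a = PComp PFst a"
definition "SND a = PComp PSnd a"

lemma eval_FST [simp]: "eval g (FST a) x = fst (prod_decode (eval g a x))"
  and eval_SND [simp]: "eval g (SND a) x = snd (prod_decode (eval g a x))"
  by (simp_all add: FST_def SND_def)

definition "PIter f = PRec PId (PComp f (PComp PFst PSnd))"

lemma eval_PIter: "eval g (PIter f) (prod_encode (n, w)) = (eval g f ^^ n) w"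
  by (induction n) (simp_all add: PIter_def)

definition "ITER f N W = PComp (PIter f) (PPair N W)"

lemma eval_ITER [simp]: "eval g (ITER f N W) x = (eval g f ^^ eval g N x) (eval g W x)"
  by (simp add: ITER_def eval_PIter)

definition "ADD a b = ITER PSucc a b"

lemma eval_ADD [simp]: "eval g (ADD a b) x = eval g a x + eval g b x"
proof -
  have "(Suc ^^ n) w = n + w" for n w by (induction n) auto
  moreover have "eval g PSucc = Suc" by (simp add: fun_eq_iff)
  ultimately show ?thesis by (simp add: ADD_def del: funpow.simps)
qed

definition "PPred = PComp (PRec PZero PFst) (PPair PId PZero)"

lemma eval_PPred [simp]: "eval g PPred x = x - 1"
  by (cases x) (simp_all add: PPred_def)

definition "SUB a b = ITER PPred b a"

lemma eval_SUB [simp]: "eval g (SUB a b) x = eval g a x - eval g b x"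
proof -
  have "((\<lambda>x. x - 1) ^^ n) w = w - n" for n w :: nat by (induction n) auto
  moreover have "eval g PPred = (\<lambda>x. x - 1)" by (simp add: fun_eq_iff)
  ultimately show ?thesis by (simp add: SUB_def del: funpow.simps)
qed

definition "MUL a b = PComp (PRec PZero (ADD (FST PSnd) (SND PSnd))) (PPair a b)"

lemma eval_MUL [simp]: "eval g (MUL a b) x = eval g a x * eval g b x"
proof -
  have "eval g (PRec PZero (ADD (FST PSnd) (SND PSnd))) (prod_encode (k, w)) = k * w" for k w
    by (induction k) simp_all
  then show ?thesis by (simp add: MUL_def)
qed

text \<open>A check is a program that returns \<open>0\<close> exactly when its condition holds; \<open>ADD\<close>
  combines checks conjunctively and \<open>MUL\<close> disjunctively.\<close>

definition "PRED a = SUB a (PConst 1)"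
definition "DIST a b = ADD (SUB a b) (SUB b a)"
definition "NZ a = SUB (PConst 1) a"

lemma eval_PRED [simp]: "eval g (PRED a) x = eval g a x - 1"
  and eval_DIST [simp]: "eval g (DIST a b) x = 0 \<longleftrightarrow> eval g a x = eval g b x"
  and eval_NZ [simp]: "eval g (NZ a) x = 0 \<longleftrightarrow> eval g a x \<noteq> 0"
  by (auto simp: PRED_def DIST_def NZ_def)

primrec list_code :: "nat list \<Rightarrow> nat" where
  "list_code [] = 0"
| "list_code (a # xs) = Suc (prod_encode (a, list_code xs))"

lemma snd_prod_decode_le: "snd (prod_decode n) \<le> n"
  by (metis le_prod_encode_2 prod.collapse prod_decode_inverse)

lemma fst_prod_decode_le: "fst (prod_decode n) \<le> n"
  by (metis le_prod_encode_1 prod.collapse prod_decode_inverse)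

function list_decode :: "nat \<Rightarrow> nat list" where
  "list_decode 0 = []"
| "list_decode (Suc n) = fst (prod_decode n) # list_decode (snd (prod_decode n))"
  by pat_completeness auto
termination by (relation "measure id") (auto simp: le_imp_less_Suc snd_prod_decode_le)

lemma list_decode_code [simp]: "list_decode (list_code xs) = xs"
  by (induction xs) auto

lemma list_code_decode [simp]: "list_code (list_decode n) = n"
  by (induction n rule: list_decode.induct) auto

lemma list_code_eq_0_iff [simp]: "list_code xs = 0 \<longleftrightarrow> xs = []"
  by (cases xs) auto

lemma length_le_list_code: "length xs \<le> list_code xs"
proof (induction xs)
  case (Cons a xs)
  then show ?case using le_prod_encode_2[of "list_code xs" a] by simp
qed simp

lemma prod_decode_0 [simp]: "prod_decode 0 = (0, 0)"
proof -
  have "prod_encode (0, 0) = 0" by (simp add: prod_encode_def)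
  then show ?thesis by (metis prod_encode_inverse)
qed

definition "tl_code n = snd (prod_decode (n - 1))"
definition "hd_code n = fst (prod_decode (n - 1))"

lemma tl_code [simp]: "tl_code (list_code xs) = list_code (tl xs)"
  by (cases xs) (auto simp: tl_code_def)

lemma hd_code [simp]: "xs \<noteq> [] \<Longrightarrow> hd_code (list_code xs) = hd xs"
  by (cases xs) (auto simp: hd_code_def)

lemma funpow_tl_code: "(tl_code ^^ n) (list_code xs) = list_code (drop n xs)"
  by (induction n arbitrary: xs) (auto simp: drop_Suc funpow_swap1 tl_drop)

definition "TL = PComp PSnd PPred"
definition "HD = PComp PFst PPred"

lemma eval_TL [simp]: "eval g TL = tl_code"
  and eval_HD [simp]: "eval g HD = hd_code"
  by (simp_all add: fun_eq_iff TL_def HD_def tl_code_def hd_code_def)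

text \<open>Derivations are lists of nodes \<open>\<langle>J, H\<rangle>\<close>, where \<open>J\<close> is the judgement the node proves.\<close>

definition points_to :: "nat list \<Rightarrow> nat \<Rightarrow> nat \<Rightarrow> bool" where
  "points_to es p J \<longleftrightarrow> p < length es \<and> fst (prod_decode (es ! p)) = J"

lemma points_to_append1: "points_to es1 p J \<Longrightarrow> points_to (es1 @ es2) p J"
  and points_to_append2: "points_to es2 p J \<Longrightarrow> points_to (es1 @ es2) (length es1 + p) J"
  by (auto simp: points_to_def nth_append)

definition "POINTS_TO E P J =
  ADD (NZ (ITER TL P E)) (DIST (PComp PFst (PComp HD (ITER TL P E))) J)"

lemma eval_POINTS_TO [simp]:
  "eval g (POINTS_TO E P J) x = 0 \<longleftrightarrow>
    points_to (list_decode (eval g E x)) (eval g P x) (eval g J x)"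
proof -
  define es where "es = list_decode (eval g E x)"
  have "(tl_code ^^ eval g P x) (eval g E x) = list_code (drop (eval g P x) es)"
    by (metis es_def funpow_tl_code list_code_decode)
  then show ?thesis
    by (auto simp: POINTS_TO_def points_to_def es_def[symmetric] hd_drop_conv_nth
        simp del: funpow.simps)
qed

section \<open>Derivations of nested relative computations\<close>

text \<open>Level \<open>Suc \<langle>\<langle>l\<^sub>1, e\<^sub>1\<rangle>, \<langle>l\<^sub>2, e\<^sub>2\<rangle>\<rangle>\<close> of the hierarchy is the oracle
  \<open>\<Phi>\<^sub>e\<^sub>1(level l\<^sub>1) \<oplus> \<Phi>\<^sub>e\<^sub>2(level l\<^sub>2)\<close>; this is the oracle of a \<open>\<K>\<^sub>2\<close>-application of
  functions computed at lower levels.\<close>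

function hier_oracle :: "nat set \<Rightarrow> nat \<Rightarrow> nat \<Rightarrow> nat option" where
  "hier_oracle X 0 = chi X"
| "hier_oracle X (Suc t) =
    join (Phi (snd (prod_decode (fst (prod_decode t))))
            (hier_oracle X (fst (prod_decode (fst (prod_decode t))))))
         (Phi (snd (prod_decode (snd (prod_decode t))))
            (hier_oracle X (fst (prod_decode (snd (prod_decode t))))))"
  by pat_completeness auto
termination
proof (relation "measure snd")
  fix X t
  show "((X, fst (prod_decode (fst (prod_decode t)))), X, Suc t) \<in> measure snd"
    using fst_prod_decode_le[of "fst (prod_decode t)"] fst_prod_decode_le[of t] by simp
  show "((X, fst (prod_decode (snd (prod_decode t)))), X, Suc t) \<in> measure snd"
    using fst_prod_decode_le[of "snd (prod_decode t)"] snd_prod_decode_le[of t] by simp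
qed auto

text \<open>A judgement \<open>judg 0 l e x y\<close> asserts that \<open>e\<close> computes \<open>y\<close> from \<open>x\<close> relative to
  level \<open>l\<close>; \<open>judg 1 l e x y\<close> asserts that the search of rule \<open>c_mu\<close> for \<open>e\<close> and \<open>x\<close>
  passes all \<open>j < y\<close>.\<close>

definition judg :: "nat \<Rightarrow> nat \<Rightarrow> nat \<Rightarrow> nat \<Rightarrow> nat \<Rightarrow> nat" where
  "judg k l e x y = prod_encode (k, prod_encode (l, prod_encode (e, prod_encode (x, y))))"

lemma judg_eq_iff [simp]:
  "judg k l e x y = judg k' l' e' x' y' \<longleftrightarrow> k = k' \<and> l = l' \<and> e = e' \<and> x = x' \<and> y = y'"
  by (simp add: judg_def prod_encode_eq)

definition judg_holds :: "nat set \<Rightarrow> nat \<Rightarrow> bool" where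
  "judg_holds X J \<longleftrightarrow>
    (\<exists>l e x y. J = judg 0 l e x y \<and> Defs.comp (hier_oracle X l) e x y) \<or>
    (\<exists>l e x y. J = judg 1 l e x y \<and>
       (\<forall>j<y. \<exists>v>0. Defs.comp (hier_oracle X l) e (prod_encode (j, x)) v))"

lemma judg_holds_judg [simp]:
  "judg_holds X (judg k l e x y) \<longleftrightarrow>
    k = 0 \<and> Defs.comp (hier_oracle X l) e x y \<or>
    k = 1 \<and> (\<forall>j<y. \<exists>v>0. Defs.comp (hier_oracle X l) e (prod_encode (j, x)) v)"
  by (auto simp: judg_holds_def)

text \<open>Instances of the rules of \<open>comp\<close>: \<open>P p J\<close> says that premise \<open>J\<close> is found at pointer
  \<open>p\<close>, \<open>q\<close> is \<open>e div 9\<close> and \<open>h\<close> an intermediate value. The oracle rule is split into a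
  query to \<open>X\<close>, read off the odd part of \<open>g\<close>, and queries to either half of a higher level.\<close>

definition basic_rule_instance :: "(nat \<Rightarrow> nat \<Rightarrow> bool) \<Rightarrow>
    nat \<Rightarrow> nat \<Rightarrow> nat \<Rightarrow> nat \<Rightarrow> nat \<Rightarrow> nat \<Rightarrow> nat \<Rightarrow> nat \<Rightarrow> nat \<Rightarrow> bool" where
  "basic_rule_instance P k l e x y q h pa pb \<longleftrightarrow>
    k = 0 \<and> e = 9 * q \<and> y = 0 \<or>
    k = 0 \<and> e = 1 + 9 * q \<and> y = Suc x \<or>
    k = 0 \<and> e = 2 + 9 * q \<and> y = fst (prod_decode x) \<or>
    k = 0 \<and> e = 3 + 9 * q \<and> y = snd (prod_decode x) \<or>
    k = 0 \<and> e = 5 + 9 * q \<and> P pa (judg 0 l (snd (prod_decode q)) x h) \<and>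
      P pb (judg 0 l (fst (prod_decode q)) h y) \<or>
    k = 0 \<and> e = 6 + 9 * q \<and> P pa (judg 0 l (fst (prod_decode q)) x (fst (prod_decode y))) \<and>
      P pb (judg 0 l (snd (prod_decode q)) x (snd (prod_decode y))) \<or>
    k = 0 \<and> e = 7 + 9 * q \<and> fst (prod_decode x) = 0 \<and>
      P pa (judg 0 l (fst (prod_decode q)) (snd (prod_decode x)) y) \<or>
    k = 0 \<and> e = 7 + 9 * q \<and> fst (prod_decode x) \<noteq> 0 \<and>
      P pa (judg 0 l e (prod_encode (fst (prod_decode x) - 1, snd (prod_decode x))) h) \<and>
      P pb (judg 0 l (snd (prod_decode q))
              (prod_encode (fst (prod_decode x) - 1, prod_encode (h, snd (prod_decode x)))) y) \<or>
    k = 0 \<and> e = 8 + 9 * q \<and> P pa (judg 0 l q (prod_encode (y, x)) 0) \<and> P pb (judg 1 l q x y)"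

definition oracle_rule_instance :: "(nat \<Rightarrow> nat) \<Rightarrow> (nat \<Rightarrow> nat \<Rightarrow> bool) \<Rightarrow>
    nat \<Rightarrow> nat \<Rightarrow> nat \<Rightarrow> nat \<Rightarrow> nat \<Rightarrow> nat \<Rightarrow> nat \<Rightarrow> nat \<Rightarrow> bool" where
  "oracle_rule_instance g P k l e x y q h pa \<longleftrightarrow>
    k = 0 \<and> e = 4 + 9 * q \<and> l = 0 \<and> y = g (Suc (x + x)) \<or>
    k = 0 \<and> e = 4 + 9 * q \<and> l \<noteq> 0 \<and> x = h + h \<and>
      P pa (judg 0 (fst (prod_decode (fst (prod_decode (l - 1)))))
                   (snd (prod_decode (fst (prod_decode (l - 1))))) h y) \<or>
    k = 0 \<and> e = 4 + 9 * q \<and> l \<noteq> 0 \<and> x = Suc (h + h) \<and>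
      P pa (judg 0 (fst (prod_decode (snd (prod_decode (l - 1)))))
                   (snd (prod_decode (snd (prod_decode (l - 1))))) h y)"

definition search_rule_instance :: "(nat \<Rightarrow> nat \<Rightarrow> bool) \<Rightarrow>
    nat \<Rightarrow> nat \<Rightarrow> nat \<Rightarrow> nat \<Rightarrow> nat \<Rightarrow> nat \<Rightarrow> nat \<Rightarrow> nat \<Rightarrow> bool" where
  "search_rule_instance P k l e x y h pa pb \<longleftrightarrow>
    k = 1 \<and> y = 0 \<or>
    k = 1 \<and> y \<noteq> 0 \<and> h \<noteq> 0 \<and> P pa (judg 1 l e x (y - 1)) \<and>
      P pb (judg 0 l e (prod_encode (y - 1, x)) h)"

definition rule_instance :: "(nat \<Rightarrow> nat) \<Rightarrow> (nat \<Rightarrow> nat \<Rightarrow> bool) \<Rightarrow>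
    nat \<Rightarrow> nat \<Rightarrow> nat \<Rightarrow> nat \<Rightarrow> nat \<Rightarrow> nat \<Rightarrow> nat \<Rightarrow> nat \<Rightarrow> nat \<Rightarrow> bool" where
  "rule_instance g P k l e x y q h pa pb \<longleftrightarrow>
    basic_rule_instance P k l e x y q h pa pb \<or> oracle_rule_instance g P k l e x y q h pa \<or>
    search_rule_instance P k l e x y h pa pb"

lemmas rule_instance_defs =
  rule_instance_def basic_rule_instance_def oracle_rule_instance_def search_rule_instance_def

lemma rule_instance_mono:
  "rule_instance g P k l e x y q h pa pb \<Longrightarrow> (\<And>p J. P p J \<Longrightarrow> Q p J) \<Longrightarrow>
    rule_instance g Q k l e x y q h pa pb"
  unfolding rule_instance_defs by (elim disjE conjE) simp_all

lemma basic_rule_instance_sound: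
  assumes "basic_rule_instance (\<lambda>_. judg_holds X) k l e x y q h pa pb"
  shows "judg_holds X (judg k l e x y)"
  using assms unfolding basic_rule_instance_def
proof (elim disjE conjE)
  assume "k = 0" "e = 2 + 9 * q" "y = fst (prod_decode x)"
  moreover have "e mod 9 = 2" using \<open>e = 2 + 9 * q\<close> by presburger
  ultimately show ?thesis by (simp add: c_fst)
next
  assume "k = 0" "e = 5 + 9 * q" "judg_holds X (judg 0 l (snd (prod_decode q)) x h)"
    "judg_holds X (judg 0 l (fst (prod_decode q)) h y)"
  then show ?thesis using c_comp[of e "fst (prod_decode q)" "snd (prod_decode q)"] by auto
next
  assume "k = 0" "e = 6 + 9 * q"
    "judg_holds X (judg 0 l (fst (prod_decode q)) x (fst (prod_decode y)))"
    "judg_holds X (judg 0 l (snd (prod_decode q)) x (snd (prod_decode y)))"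
  then show ?thesis
    using c_pair[of e "fst (prod_decode q)" "snd (prod_decode q)" _ x "fst (prod_decode y)"
        "snd (prod_decode y)"]
    by simp
next
  assume "k = 0" "e = 7 + 9 * q" "fst (prod_decode x) = 0"
    "judg_holds X (judg 0 l (fst (prod_decode q)) (snd (prod_decode x)) y)"
  then show ?thesis
    using c_prim0[of e "fst (prod_decode q)" "snd (prod_decode q)" x "snd (prod_decode x)"]
    by (auto simp: prod_eq_iff)
next
  assume "k = 0" "e = 7 + 9 * q" "fst (prod_decode x) \<noteq> 0"
    "judg_holds X (judg 0 l e (prod_encode (fst (prod_decode x) - 1, snd (prod_decode x))) h)"
    "judg_holds X (judg 0 l (snd (prod_decode q))
       (prod_encode (fst (prod_decode x) - 1, prod_encode (h, snd (prod_decode x)))) y)"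
  then show ?thesis
    using c_primS[of e "fst (prod_decode q)" "snd (prod_decode q)" x "fst (prod_decode x) - 1"
        "snd (prod_decode x)"]
    by (auto simp: prod_eq_iff)
qed (auto intro: comp.intros)

lemma oracle_rule_instance_sound:
  assumes odd_g: "\<And>u. g (Suc (u + u)) = (if u \<in> X then 1 else 0)"
    and "oracle_rule_instance g (\<lambda>_. judg_holds X) k l e x y q h pa"
  shows "judg_holds X (judg k l e x y)"
proof (cases l)
  case 0
  with assms show ?thesis
    by (auto intro: c_orc simp: oracle_rule_instance_def chi_def)
next
  case (Suc t)
  with assms(2) show ?thesis
    by (auto intro!: c_orc simp: oracle_rule_instance_def join_def Phi_eq_Some_iff)
qed

lemma search_rule_instance_sound:
  assumes "search_rule_instance (\<lambda>_. judg_holds X) k l e x y h pa pb"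
  shows "judg_holds X (judg k l e x y)"
proof -
  have "j < y - 1 \<or> j = y - 1" if "j < y" for j
    using that by linarith
  with assms show ?thesis by (auto simp: search_rule_instance_def)
qed

lemma rule_instance_sound:
  assumes odd_g: "\<And>u. g (Suc (u + u)) = (if u \<in> X then 1 else 0)"
    and "rule_instance g (\<lambda>_. judg_holds X) k l e x y q h pa pb"
  shows "judg_holds X (judg k l e x y)"
  using assms(2) unfolding rule_instance_def
  by (elim disjE) (erule basic_rule_instance_sound oracle_rule_instance_sound[OF odd_g]
      search_rule_instance_sound)+

text \<open>A node \<open>\<langle>J, \<langle>q, \<langle>h, \<langle>pa, pb\<rangle>\<rangle>\<rangle>\<rangle>\<close> of a derivation may only point to later nodes.\<close>

definition node :: "nat \<Rightarrow> nat \<Rightarrow> nat \<Rightarrow> nat \<Rightarrow> nat \<Rightarrow> nat \<Rightarrow> nat \<Rightarrow> nat \<Rightarrow> nat \<Rightarrow> nat" where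
  "node k l e x y q h pa pb =
    prod_encode (judg k l e x y, prod_encode (q, prod_encode (h, prod_encode (pa, pb))))"

lemma node_cases: obtains k l e x y q h pa pb where "n = node k l e x y q h pa pb"
  unfolding node_def judg_def by (metis prod.collapse prod_decode_inverse)

lemma node_eq_iff [simp]:
  "node k l e x y q h pa pb = node k' l' e' x' y' q' h' pa' pb' \<longleftrightarrow>
    k = k' \<and> l = l' \<and> e = e' \<and> x = x' \<and> y = y' \<and> q = q' \<and> h = h' \<and> pa = pa' \<and> pb = pb'"
  by (auto simp: node_def prod_encode_eq)

definition node_ok :: "(nat \<Rightarrow> nat) \<Rightarrow> nat \<Rightarrow> nat list \<Rightarrow> bool" where
  "node_ok g n es \<longleftrightarrow> (\<exists>k l e x y q h pa pb. n = node k l e x y q h pa pb \<and>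
     rule_instance g (points_to es) k l e x y q h pa pb)"

lemma node_ok_node:
  "rule_instance g (points_to es) k l e x y q h pa pb \<Longrightarrow> node_ok g (node k l e x y q h pa pb) es"
  unfolding node_ok_def by (intro exI conjI, rule refl)

definition derivation :: "(nat \<Rightarrow> nat) \<Rightarrow> nat list \<Rightarrow> bool" where
  "derivation g xs \<longleftrightarrow> (\<forall>i<length xs. node_ok g (xs ! i) (drop (Suc i) xs))"

lemma derivation_Nil [simp]: "derivation g []"
  by (simp add: derivation_def)

lemma derivation_Cons: "derivation g (n # xs) \<longleftrightarrow> node_ok g n xs \<and> derivation g xs"
  by (auto simp: derivation_def nth_Cons split: nat.splits)

lemma node_ok_append: "node_ok g n es \<Longrightarrow> node_ok g n (es @ es')"
  unfolding node_ok_def by (metis rule_instance_mono points_to_append1)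

lemma derivation_append: "derivation g xs \<Longrightarrow> derivation g ys \<Longrightarrow> derivation g (xs @ ys)"
  by (induction xs) (auto simp: derivation_Cons node_ok_append)

lemma derivation_sound:
  assumes odd_g: "\<And>u. g (Suc (u + u)) = (if u \<in> X then 1 else 0)"
  shows "derivation g xs \<Longrightarrow> points_to xs p J \<Longrightarrow> judg_holds X J"
proof (induction xs arbitrary: p J)
  case (Cons n xs)
  then have IH: "points_to xs p' J' \<Longrightarrow> judg_holds X J'" for p' J'
    by (simp add: derivation_Cons)
  show ?case
  proof (cases p)
    case 0
    from Cons.prems obtain k l e x y q h pa pb where n: "n = node k l e x y q h pa pb"
      and inst: "rule_instance g (points_to xs) k l e x y q h pa pb"
      by (auto simp: derivation_Cons node_ok_def)
    have "rule_instance g (\<lambda>_. judg_holds X) k l e x y q h pa pb"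
      using inst IH by (rule rule_instance_mono)
    moreover have "J = judg k l e x y"
      using Cons.prems(2) 0 n by (simp add: points_to_def node_def)
    ultimately show ?thesis by (simp only: rule_instance_sound[OF odd_g])
  next
    case (Suc p')
    with Cons.prems(2) IH[of p'] show ?thesis by (simp add: points_to_def)
  qed
qed (simp add: points_to_def)

definition derivable :: "(nat \<Rightarrow> nat) \<Rightarrow> nat \<Rightarrow> bool" where
  "derivable g J \<longleftrightarrow> (\<exists>xs p. derivation g xs \<and> points_to xs p J)"

lemma derivable_axiom:
  assumes "\<And>P. rule_instance g P k l e x y q h 0 0"
  shows "derivable g (judg k l e x y)"
proof -
  have "derivation g [node k l e x y q h 0 0]"
    by (simp add: derivation_Cons node_ok_node assms)
  moreover have "points_to [node k l e x y q h 0 0] 0 (judg k l e x y)"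
    by (simp add: points_to_def node_def)
  ultimately show ?thesis unfolding derivable_def by blast
qed

lemma derivable_by_rule:
  assumes "derivable g J1" "derivable g J2"
    and "\<And>P p1 p2. P p1 J1 \<Longrightarrow> P p2 J2 \<Longrightarrow> rule_instance g P k l e x y q h p1 p2"
  shows "derivable g (judg k l e x y)"
proof -
  from assms(1,2) obtain xs1 p1 xs2 p2 where xs: "derivation g xs1" "derivation g xs2"
    and p: "points_to xs1 p1 J1" "points_to xs2 p2 J2"
    unfolding derivable_def by blast
  let ?n = "node k l e x y q h p1 (length xs1 + p2)"
  have "rule_instance g (points_to (xs1 @ xs2)) k l e x y q h p1 (length xs1 + p2)"
    by (rule assms(3)) (simp_all add: p points_to_append1 points_to_append2)
  then have "derivation g (?n # xs1 @ xs2)"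
    using xs by (simp add: derivation_Cons node_ok_node derivation_append)
  moreover have "points_to (?n # xs1 @ xs2) 0 (judg k l e x y)"
    by (simp add: points_to_def node_def)
  ultimately show ?thesis unfolding derivable_def by blast
qed

lemma derivable_search_prefix:
  assumes "\<And>j. j < y \<Longrightarrow> \<exists>v>0. derivable g (judg 0 l e (prod_encode (j, x)) v)"
  shows "derivable g (judg 1 l e x y)"
  using assms
proof (induction y)
  case 0
  show ?case by (rule derivable_axiom) (simp add: rule_instance_defs)
next
  case (Suc y)
  then obtain v where "v > 0" and v: "derivable g (judg 0 l e (prod_encode (y, x)) v)"
    by blast
  have "derivable g (judg 1 l e x y)"
    using Suc by simp
  then show ?case
    using derivable_by_rule[OF _ v, where q = 0 and h = v] \<open>v > 0\<close>
    by (simp add: rule_instance_defs)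
qed

lemma obtain_quotient_9:
  assumes "(e::nat) mod 9 = r"
  obtains q where "e = r + 9 * q"
  using assms div_mult_mod_eq[of e 9] by (metis add.commute mult.commute)

lemma derivable_query:
  assumes odd_g: "\<And>u. g (Suc (u + u)) = (if u \<in> X then 1 else 0)"
    and "e mod 9 = 4" and query: "hier_oracle X l x = Some y"
    and lower: "\<And>l' e x y. l' < l \<Longrightarrow> Defs.comp (hier_oracle X l') e x y \<Longrightarrow>
      derivable g (judg 0 l' e x y)"
  shows "derivable g (judg 0 l e x y)"
proof -
  obtain q where e: "e = 4 + 9 * q"
    using \<open>e mod 9 = 4\<close> by (rule obtain_quotient_9)
  show ?thesis
  proof (cases l)
    case 0
    with query odd_g[of x] have y: "y = g (Suc (x + x))" by (simp add: chi_def)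
    show ?thesis
      by (rule derivable_axiom[where q = q]) (simp add: rule_instance_defs 0 e y)
  next
    case (Suc t)
    let ?l1 = "fst (prod_decode (fst (prod_decode t)))"
    let ?e1 = "snd (prod_decode (fst (prod_decode t)))"
    let ?l2 = "fst (prod_decode (snd (prod_decode t)))"
    let ?e2 = "snd (prod_decode (snd (prod_decode t)))"
    have "?l1 < l" "?l2 < l"
      using Suc fst_prod_decode_le[of t] snd_prod_decode_le[of t]
        fst_prod_decode_le[of "fst (prod_decode t)"] fst_prod_decode_le[of "snd (prod_decode t)"]
      by linarith+
    have "\<exists>h. x = h + h \<or> x = Suc (h + h)"
      by presburger
    then obtain h where "x = h + h \<or> x = Suc (h + h)" ..
    then show ?thesis
    proof
      assume x: "x = h + h"
      with query Suc have "Defs.comp (hier_oracle X ?l1) ?e1 h y"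
        by (simp add: join_def Phi_eq_Some_iff)
      with lower \<open>?l1 < l\<close> have premise: "derivable g (judg 0 ?l1 ?e1 h y)" by blast
      show ?thesis
        by (rule derivable_by_rule[OF premise premise, where q = q and h = h])
          (simp add: rule_instance_defs Suc e x)
    next
      assume x: "x = Suc (h + h)"
      with query Suc have "Defs.comp (hier_oracle X ?l2) ?e2 h y"
        by (simp add: join_def Phi_eq_Some_iff)
      with lower \<open>?l2 < l\<close> have premise: "derivable g (judg 0 ?l2 ?e2 h y)" by blast
      show ?thesis
        by (rule derivable_by_rule[OF premise premise, where q = q and h = h])
          (simp add: rule_instance_defs Suc e x)
    qed
  qed
qed

lemma derivable_complete:
  assumes odd_g: "\<And>u. g (Suc (u + u)) = (if u \<in> X then 1 else 0)"
  shows "Defs.comp (hier_oracle X l) e x y \<Longrightarrow> derivable g (judg 0 l e x y)"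
proof (induction l arbitrary: e x y rule: less_induct)
  case (less l)
  from less.prems show ?case
  proof (induction rule: comp.induct)
    case (c_zero e x)
    then obtain q where e: "e = 0 + 9 * q" by (rule obtain_quotient_9)
    show ?case by (rule derivable_axiom[where q = q]) (simp add: rule_instance_defs e)
  next
    case (c_succ e x)
    then obtain q where e: "e = 1 + 9 * q" by (rule obtain_quotient_9)
    show ?case by (rule derivable_axiom[where q = q]) (simp add: rule_instance_defs e)
  next
    case (c_fst e x)
    then obtain q where e: "e = 2 + 9 * q" by (rule obtain_quotient_9)
    show ?case by (rule derivable_axiom[where q = q]) (simp add: rule_instance_defs e)
  next
    case (c_snd e x)
    then obtain q where e: "e = 3 + 9 * q" by (rule obtain_quotient_9)
    show ?case by (rule derivable_axiom[where q = q]) (simp add: rule_instance_defs e)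
  next
    case (c_orc e x y)
    then show ?case using derivable_query[OF odd_g] less.IH by blast
  next
    case (c_comp e a b x z y)
    obtain q where e: "e = 5 + 9 * q" by (rule obtain_quotient_9[OF c_comp.hyps(1)])
    from c_comp.IH show ?case
      by (rule derivable_by_rule[where q = q and h = z])
        (use c_comp.hyps(2) e in \<open>simp add: rule_instance_defs\<close>)
  next
    case (c_pair e a b x y1 y2)
    obtain q where e: "e = 6 + 9 * q" by (rule obtain_quotient_9[OF c_pair.hyps(1)])
    from c_pair.IH show ?case
      by (rule derivable_by_rule[where q = q and h = 0])
        (use c_pair.hyps(2) e in \<open>simp add: rule_instance_defs\<close>)
  next
    case (c_prim0 e a b x w y)
    obtain q where e: "e = 7 + 9 * q" by (rule obtain_quotient_9[OF c_prim0.hyps(1)])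
    from c_prim0.IH c_prim0.IH show ?case
      by (rule derivable_by_rule[where q = q and h = 0])
        (use c_prim0.hyps(2,3) e in \<open>simp add: rule_instance_defs\<close>)
  next
    case (c_primS e a b x k w z y)
    obtain q where e: "e = 7 + 9 * q" by (rule obtain_quotient_9[OF c_primS.hyps(1)])
    from c_primS.IH show ?case
      by (rule derivable_by_rule[where q = q and h = z])
        (use c_primS.hyps(2,3) e in \<open>simp add: rule_instance_defs\<close>)
  next
    case (c_mu e k x)
    obtain q where e: "e = 8 + 9 * q" by (rule obtain_quotient_9[OF c_mu.hyps(1)])
    have "derivable g (judg 1 l (e div 9) x k)"
      using c_mu.IH(2) by (intro derivable_search_prefix) blast
    with c_mu.IH(1) show ?case
      by (rule derivable_by_rule[where q = q and h = 0]) (simp add: rule_instance_defs e)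
  qed
qed

lemma derivable_judg_0_iff:
  assumes odd_g: "\<And>u. g (Suc (u + u)) = (if u \<in> X then 1 else 0)"
  shows "derivable g (judg 0 l e x y) \<longleftrightarrow> Defs.comp (hier_oracle X l) e x y"
proof
  assume "derivable g (judg 0 l e x y)"
  then have "judg_holds X (judg 0 l e x y)"
    unfolding derivable_def using derivation_sound[OF odd_g] by blast
  then show "Defs.comp (hier_oracle X l) e x y" by simp
qed (rule derivable_complete[OF odd_g])

section \<open>Checking derivations by a loop-free program\<close>

text \<open>Fields of the input \<open>\<langle>node k l e x y q h pa pb, list_code es\<rangle>\<close>.\<close>

definition "Fk = FST (FST PFst)"
definition "Fl = FST (SND (FST PFst))"
definition "Fe = FST (SND (SND (FST PFst)))"
definition "Fx = FST (SND (SND (SND (FST PFst))))"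
definition "Fy = SND (SND (SND (SND (FST PFst))))"
definition "Fq = FST (SND PFst)"
definition "Fh = FST (SND (SND PFst))"
definition "Fpa = FST (SND (SND (SND PFst)))"
definition "Fpb = SND (SND (SND (SND PFst)))"

lemma eval_fields [simp]:
  fixes k l e x y q h pa pb E :: nat
  defines "inp \<equiv> prod_encode (node k l e x y q h pa pb, E)"
  shows "eval g Fk inp = k" "eval g Fl inp = l" "eval g Fe inp = e" "eval g Fx inp = x"
    "eval g Fy inp = y" "eval g Fq inp = q" "eval g Fh inp = h" "eval g Fpa inp = pa"
    "eval g Fpb inp = pb" "eval g PSnd inp = E"
  by (simp_all add: inp_def node_def judg_def Fk_def Fl_def Fe_def Fx_def Fy_def Fq_def Fh_def
      Fpa_def Fpb_def)

definition "JUDG k l e x y = PPair k (PPair l (PPair e (PPair x y)))"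

lemma eval_JUDG [simp]:
  "eval g (JUDG k l e x y) z =
    judg (eval g k z) (eval g l z) (eval g e z) (eval g x z) (eval g y z)"
  by (simp add: JUDG_def judg_def)

definition "INSTR r = DIST Fe (ADD (PConst r) (MUL (PConst 9) Fq))"
definition "PREMISE p J = POINTS_TO PSnd p J"
definition "LOWER = PRED Fl"

definition "ZERO_RULE = ADD Fk (ADD (INSTR 0) Fy)"
definition "SUCC_RULE = ADD Fk (ADD (INSTR 1) (DIST Fy (PComp PSucc Fx)))"
definition "FST_RULE = ADD Fk (ADD (INSTR 2) (DIST Fy (FST Fx)))"
definition "SND_RULE = ADD Fk (ADD (INSTR 3) (DIST Fy (SND Fx)))"
definition "ORACLE_RULE =
  ADD Fk (ADD (INSTR 4) (ADD Fl (DIST Fy (PComp POracle (PComp PSucc (ADD Fx Fx))))))"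
definition "LEFT_RULE = ADD Fk (ADD (INSTR 4) (ADD (NZ Fl) (ADD (DIST Fx (ADD Fh Fh))
  (PREMISE Fpa (JUDG (PConst 0) (FST (FST LOWER)) (SND (FST LOWER)) Fh Fy)))))"
definition "RIGHT_RULE = ADD Fk (ADD (INSTR 4) (ADD (NZ Fl) (ADD (DIST Fx (PComp PSucc (ADD Fh Fh)))
  (PREMISE Fpa (JUDG (PConst 0) (FST (SND LOWER)) (SND (SND LOWER)) Fh Fy)))))"
definition "COMP_RULE = ADD Fk (ADD (INSTR 5) (ADD
  (PREMISE Fpa (JUDG (PConst 0) Fl (SND Fq) Fx Fh))
  (PREMISE Fpb (JUDG (PConst 0) Fl (FST Fq) Fh Fy))))"
definition "PAIR_RULE = ADD Fk (ADD (INSTR 6) (ADD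
  (PREMISE Fpa (JUDG (PConst 0) Fl (FST Fq) Fx (FST Fy)))
  (PREMISE Fpb (JUDG (PConst 0) Fl (SND Fq) Fx (SND Fy)))))"
definition "PRIM0_RULE = ADD Fk (ADD (INSTR 7) (ADD (FST Fx)
  (PREMISE Fpa (JUDG (PConst 0) Fl (FST Fq) (SND Fx) Fy))))"
definition "PRIMS_RULE = ADD Fk (ADD (INSTR 7) (ADD (NZ (FST Fx)) (ADD
  (PREMISE Fpa (JUDG (PConst 0) Fl Fe (PPair (PRED (FST Fx)) (SND Fx)) Fh))
  (PREMISE Fpb (JUDG (PConst 0) Fl (SND Fq) (PPair (PRED (FST Fx)) (PPair Fh (SND Fx))) Fy)))))"
definition "MU_RULE = ADD Fk (ADD (INSTR 8) (ADD
  (PREMISE Fpa (JUDG (PConst 0) Fl Fq (PPair Fy Fx) (PConst 0)))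
  (PREMISE Fpb (JUDG (PConst 1) Fl Fq Fx Fy))))"
definition "SEARCH_NIL_RULE = ADD (DIST Fk (PConst 1)) Fy"
definition "SEARCH_STEP_RULE = ADD (DIST Fk (PConst 1)) (ADD (NZ Fy) (ADD (NZ Fh) (ADD
  (PREMISE Fpa (JUDG (PConst 1) Fl Fe Fx (PRED Fy)))
  (PREMISE Fpb (JUDG (PConst 0) Fl Fe (PPair (PRED Fy) Fx) Fh)))))"

definition "NODE_OK =
  MUL ZERO_RULE (MUL SUCC_RULE (MUL FST_RULE (MUL SND_RULE (MUL COMP_RULE (MUL PAIR_RULE
  (MUL PRIM0_RULE (MUL PRIMS_RULE (MUL MU_RULE (MUL ORACLE_RULE (MUL LEFT_RULE (MUL RIGHT_RULE
  (MUL SEARCH_NIL_RULE SEARCH_STEP_RULE))))))))))))"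

lemma eval_NODE_OK_node:
  "eval g NODE_OK (prod_encode (node k l e x y q h pa pb, list_code es)) = 0 \<longleftrightarrow>
    rule_instance g (points_to es) k l e x y q h pa pb"
  unfolding NODE_OK_def ZERO_RULE_def SUCC_RULE_def FST_RULE_def SND_RULE_def ORACLE_RULE_def
    LEFT_RULE_def RIGHT_RULE_def COMP_RULE_def PAIR_RULE_def PRIM0_RULE_def PRIMS_RULE_def
    MU_RULE_def SEARCH_NIL_RULE_def SEARCH_STEP_RULE_def INSTR_def PREMISE_def LOWER_def
    rule_instance_defs
  by simp

lemma eval_NODE_OK: "eval g NODE_OK (prod_encode (n, list_code es)) = 0 \<longleftrightarrow> node_ok g n es"
  by (cases n rule: node_cases) (simp add: eval_NODE_OK_node node_ok_def)

definition suffix_defect :: "(nat \<Rightarrow> nat) \<Rightarrow> nat \<Rightarrow> nat" where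
  "suffix_defect g n = n * eval g NODE_OK (prod_encode (hd_code n, tl_code n))"

lemma suffix_defect_eq_0_iff:
  "suffix_defect g (list_code (drop t xs)) = 0 \<longleftrightarrow>
    length xs \<le> t \<or> node_ok g (xs ! t) (drop (Suc t) xs)"
proof (cases "t < length xs")
  case True
  then have "drop t xs \<noteq> []" by simp
  with True show ?thesis
    by (simp add: suffix_defect_def eval_NODE_OK hd_drop_conv_nth drop_Suc tl_drop)
qed (simp add: suffix_defect_def)

definition "DERIVATION_STEP = PPair (PComp TL PFst)
  (ADD PSnd (MUL PFst (PComp NODE_OK (PPair (PComp HD PFst) (PComp TL PFst)))))"

lemma funpow_DERIVATION_STEP:
  "(eval g DERIVATION_STEP ^^ i) (prod_encode (list_code xs, a)) =
    prod_encode (list_code (drop i xs), a + (\<Sum>t<i. suffix_defect g (list_code (drop t xs))))"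
  by (induction i) (simp_all add: DERIVATION_STEP_def suffix_defect_def drop_Suc tl_drop)

definition "DERIVATION_OK = SND (ITER DERIVATION_STEP PId (PPair PId (PConst 0)))"

lemma eval_DERIVATION_OK: "eval g DERIVATION_OK L = 0 \<longleftrightarrow> derivation g (list_decode L)"
proof -
  define xs where "xs = list_decode L"
  then have L: "L = list_code xs" by simp
  have "eval g DERIVATION_OK L = (\<Sum>t<L. suffix_defect g (list_code (drop t xs)))"
    by (simp add: DERIVATION_OK_def L funpow_DERIVATION_STEP del: funpow.simps)
  also have "\<dots> = 0 \<longleftrightarrow> (\<forall>t<L. length xs \<le> t \<or> node_ok g (xs ! t) (drop (Suc t) xs))"
    by (simp add: suffix_defect_eq_0_iff lessThan_iff Ball_def)
  also have "\<dots> \<longleftrightarrow> (\<forall>t<length xs. node_ok g (xs ! t) (drop (Suc t) xs))"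
  proof -
    have "t < L" if "t < length xs" for t
      using that length_le_list_code[of xs] L by simp
    then show ?thesis by (meson not_le)
  qed
  finally show ?thesis by (simp add: derivation_def xs_def)
qed

definition certifies :: "(nat \<Rightarrow> nat) \<Rightarrow> nat \<Rightarrow> nat \<Rightarrow> bool" where
  "certifies g d J \<longleftrightarrow> derivation g (list_decode (fst (prod_decode d))) \<and>
     points_to (list_decode (fst (prod_decode d))) (snd (prod_decode d)) J"

lemma derivable_iff_certifies: "derivable g J \<longleftrightarrow> (\<exists>d. certifies g d J)"
proof
  assume "derivable g J"
  then obtain xs p where "derivation g xs" "points_to xs p J"
    by (auto simp: derivable_def)
  then have "certifies g (prod_encode (list_code xs, p)) J"
    by (simp add: certifies_def)
  then show "\<exists>d. certifies g d J" ..
qed (auto simp: derivable_def certifies_def)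

definition "DERIVES D J = ADD (PComp DERIVATION_OK (FST D)) (POINTS_TO (FST D) (SND D) J)"

lemma eval_DERIVES [simp]: "eval g (DERIVES D J) z = 0 \<longleftrightarrow> certifies g (eval g D z) (eval g J z)"
  by (simp add: DERIVES_def certifies_def eval_DERIVATION_OK)

text \<open>The code of \<open>\<lambda>x. 0 \<circ> (\<mu>k. P\<langle>k, x\<rangle> = 0)\<close>.\<close>

definition search_code :: "prog \<Rightarrow> nat" where
  "search_code P = 5 + 9 * prod_encode (0, 8 + 9 * code P)"

lemma comp_search_code_iff:
  "Defs.comp (\<lambda>a. Some (g a)) (search_code P) x y \<longleftrightarrow>
    y = 0 \<and> (\<exists>k. eval g P (prod_encode (k, x)) = 0)"
proof -
  let ?Or = "\<lambda>a. Some (g a)" and ?mu = "8 + 9 * code P"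
  have mu: "Defs.comp ?Or ?mu x k \<longleftrightarrow>
      eval g P (prod_encode (k, x)) = 0 \<and> (\<forall>j<k. eval g P (prod_encode (j, x)) \<noteq> 0)" for k
    using comp_mu_inv[of ?Or ?mu x k] c_mu[of ?mu ?Or k x] by (auto simp: comp_code_iff)
  have "Defs.comp ?Or (search_code P) x y \<longleftrightarrow> (\<exists>k. Defs.comp ?Or ?mu x k \<and> Defs.comp ?Or 0 k y)"
    using comp_comp_inv[of ?Or "search_code P" x y 0 ?mu] c_comp[of "search_code P" 0 ?mu ?Or x]
    by (auto simp: search_code_def)
  also have "\<dots> \<longleftrightarrow> y = 0 \<and> (\<exists>k. Defs.comp ?Or ?mu x k)"
    using comp_zero_inv[of ?Or 0] c_zero[of 0 ?Or] by auto
  finally show ?thesis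
    unfolding mu by (simp add: exists_least_iff[where P = "\<lambda>k. eval g P (prod_encode (k, x)) = 0"])
qed

lemma Phi_search_code:
  "Phi (search_code P) (\<lambda>a. Some (g a)) x =
    (if \<exists>k. eval g P (prod_encode (k, x)) = 0 then Some 0 else None)"
  by (simp add: Phi_eq_Some_iff Phi_eq_None_iff comp_search_code_iff)

section \<open>No embedding of \<open>\<B>\<^sup>X\<close> into \<open>\<K>\<^sub>2\<^sup>X\<close>\<close>

abbreviation const_pfun :: "nat \<Rightarrow> nat \<Rightarrow> nat option" where
  "const_pfun n \<equiv> \<lambda>_. Some n"

lemma chi_eq: "chi X = (\<lambda>a. Some (if a \<in> X then 1 else 0))"
  by (simp add: fun_eq_iff chi_def)

lemma Phi_code_in_B_X: "Phi (code p) (chi X) \<in> B_X X"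
  by (auto simp: B_X_def)

lemma const_pfun_in_B_X: "const_pfun n \<in> B_X X"
proof -
  have "Phi (code (PConst n)) (chi X) = const_pfun n"
    unfolding chi_eq Phi_code by simp
  then show ?thesis using Phi_code_in_B_X by metis
qed

lemma chi_in_B_X: "chi X \<in> B_X X"
proof -
  have "Phi (code POracle) (chi X) = chi X"
    unfolding chi_eq Phi_code by simp
  then show ?thesis using Phi_code_in_B_X by metis
qed

text \<open>\<open>17 = 8 + 9 * 1\<close> searches for a zero of the successor function.\<close>

lemma nowhere_defined_in_B_X: "(\<lambda>_. None) \<in> B_X X"
proof -
  have "\<not> Defs.comp Or 17 x y" for Or x y
    using comp_mu_inv[of Or 17 x y] comp_succ_inv[of Or 1 _ 0] by auto
  then have "Phi 17 (chi X) = (\<lambda>_. None)"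
    by (simp add: fun_eq_iff Phi_eq_None_iff)
  then show ?thesis by (auto simp: B_X_def)
qed

definition "SUCC_ARG = PComp PSucc (PComp POracle (PConst 1))"

lemma B_app_SUCC_ARG:
  "B_app (const_pfun (code SUCC_ARG)) (const_pfun n) = Some (const_pfun (Suc n))"
proof -
  have "join (const_pfun (code SUCC_ARG)) (const_pfun n) =
      (\<lambda>a. Some (if even a then code SUCC_ARG else n))"
    by (simp add: fun_eq_iff join_def)
  then show ?thesis
    using Phi_code[of SUCC_ARG "\<lambda>a. if even a then code SUCC_ARG else n"]
    by (simp add: B_app_def SUCC_ARG_def)
qed

lemma K2_app_SomeD:
  "K2_app g h = Some r \<Longrightarrow> Phi (g 0) (join (Some \<circ> g) (Some \<circ> h)) = Some \<circ> r"
  by (auto simp: K2_app_def Let_def split: if_splits intro!: ext)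

lemma sub_app_eq_Some_iff: "sub_app C app a b = Some c \<longleftrightarrow> app a b = Some c \<and> c \<in> C"
  by (auto simp: sub_app_def split: option.splits)

locale B_K2_embedding =
  fixes X :: "nat set" and f :: "(nat \<Rightarrow> nat option) \<Rightarrow> nat \<Rightarrow> nat"
  assumes embedding:
    "pca_embedding (B_X X) (sub_app (B_X X) B_app) (K2_X X) (sub_app (K2_X X) K2_app) f"
begin

lemma inj_f: "inj_on f (B_X X)"
  using embedding by (simp add: pca_embedding_def)

lemma K2_app_f:
  assumes "a \<in> B_X X" "b \<in> B_X X" "B_app a b = Some c" "c \<in> B_X X"
  shows "K2_app (f a) (f b) = Some (f c)"
  using embedding assms by (simp add: pca_embedding_def sub_app_eq_Some_iff)

definition K2_code :: "(nat \<Rightarrow> nat option) \<Rightarrow> nat" where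
  "K2_code a = (SOME p. Phi p (chi X) = Some \<circ> f a)"

lemma Phi_K2_code: "a \<in> B_X X \<Longrightarrow> Phi (K2_code a) (chi X) = Some \<circ> f a"
proof -
  assume "a \<in> B_X X"
  with embedding have "f a \<in> K2_X X"
    by (auto simp: pca_embedding_def)
  then have "\<exists>p. Phi p (chi X) = Some \<circ> f a"
    by (simp add: K2_X_def)
  then show ?thesis
    unfolding K2_code_def by (rule someI_ex)
qed

text \<open>\<open>numeral_level n = (l, e)\<close> with \<open>\<Phi>\<^sub>e(level l) = f (const_pfun n)\<close>, following
  \<open>const_pfun (Suc n) = SUCC_ARG \<cdot> const_pfun n\<close> in \<open>\<B>\<close>.\<close>

primrec numeral_level :: "nat \<Rightarrow> nat \<times> nat" where
  "numeral_level 0 = (0, K2_code (const_pfun 0))"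
| "numeral_level (Suc n) =
    (Suc (prod_encode (prod_encode (0, K2_code (const_pfun (code SUCC_ARG))),
                       prod_encode (numeral_level n))),
     f (const_pfun (code SUCC_ARG)) 0)"

lemma Phi_numeral_level:
  "Phi (snd (numeral_level n)) (hier_oracle X (fst (numeral_level n))) = Some \<circ> f (const_pfun n)"
proof (induction n)
  case 0
  show ?case using Phi_K2_code[OF const_pfun_in_B_X] by simp
next
  case (Suc n)
  have "K2_app (f (const_pfun (code SUCC_ARG))) (f (const_pfun n)) = Some (f (const_pfun (Suc n)))"
    by (rule K2_app_f[OF const_pfun_in_B_X const_pfun_in_B_X B_app_SUCC_ARG const_pfun_in_B_X])
  from K2_app_SomeD[OF this] show ?case
    using Suc Phi_K2_code[OF const_pfun_in_B_X] by (simp add: prod.case_eq_if o_def)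
qed

definition app_level :: "nat \<Rightarrow> nat" where
  "app_level n =
    Suc (prod_encode (prod_encode (numeral_level n), prod_encode (0, K2_code (chi X))))"

lemma Phi_app_level:
  "K2_app (f (const_pfun n)) (f (chi X)) = Some r \<Longrightarrow>
    Phi (f (const_pfun n) 0) (hier_oracle X (app_level n)) = Some \<circ> r"
  using K2_app_SomeD Phi_numeral_level[of n] Phi_K2_code[OF chi_in_B_X]
  by (simp add: app_level_def prod.case_eq_if)

text \<open>A certificate that the \<open>\<K>\<^sub>2\<close>-application \<open>f (const_pfun n) \<cdot> f (chi X)\<close>
  differs from \<open>f (const_pfun 0)\<close>.\<close>

definition differs :: "(nat \<Rightarrow> nat) \<Rightarrow> nat \<Rightarrow> bool" where
  "differs g n \<longleftrightarrow> (\<exists>m v w ef.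
     derivable g (judg 0 (fst (numeral_level n)) (snd (numeral_level n)) 0 ef) \<and>
     derivable g (judg 0 (app_level n) ef m v) \<and>
     derivable g (judg 0 0 (K2_code (const_pfun 0)) m w) \<and> v \<noteq> w)"

lemma differs_iff:
  assumes odd_g: "\<And>u. g (Suc (u + u)) = (if u \<in> X then 1 else 0)"
    and app: "K2_app (f (const_pfun n)) (f (chi X)) = Some r"
  shows "differs g n \<longleftrightarrow> r \<noteq> f (const_pfun 0)"
proof -
  have hier_0: "hier_oracle X 0 = chi X" by simp
  note total = Phi_numeral_level[of n] Phi_app_level[OF app]
    Phi_K2_code[OF const_pfun_in_B_X, of 0, folded hier_0]
  have "differs g n \<longleftrightarrow> (\<exists>m. r m \<noteq> f (const_pfun 0) m)"
    using total
    by (simp add: differs_def derivable_judg_0_iff[OF odd_g] Phi_eq_total_iff[symmetric]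
        Phi_eq_Some_iff[symmetric])
  then show ?thesis by (auto simp: fun_eq_iff)
qed

definition "NUMERAL_STEP =
  PPair (PComp PSucc (PPair (PConst (prod_encode (0, K2_code (const_pfun (code SUCC_ARG))))) PId))
    (PConst (f (const_pfun (code SUCC_ARG)) 0))"

definition "NUMERAL_LEVEL =
  ITER NUMERAL_STEP (PComp POracle PZero) (PConst (prod_encode (numeral_level 0)))"

lemma eval_NUMERAL_LEVEL [simp]:
  "eval g NUMERAL_LEVEL x = prod_encode (numeral_level (g 0))"
proof -
  have "(eval g NUMERAL_STEP ^^ n) (prod_encode (numeral_level 0)) = prod_encode (numeral_level n)"
    for n by (induction n) (simp_all add: NUMERAL_STEP_def)
  then show ?thesis by (simp add: NUMERAL_LEVEL_def del: funpow.simps)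
qed

definition "APP_LEVEL =
  PComp PSucc (PPair NUMERAL_LEVEL (PConst (prod_encode (0, K2_code (chi X)))))"

lemma eval_APP_LEVEL [simp]: "eval g APP_LEVEL x = app_level (g 0)"
  by (simp add: APP_LEVEL_def app_level_def)

text \<open>Fields of the input \<open>\<langle>\<langle>\<langle>m, \<langle>v, \<langle>w, ef\<rangle>\<rangle>\<rangle>, \<langle>d\<^sub>1, \<langle>d\<^sub>2, d\<^sub>3\<rangle>\<rangle>\<rangle>, x\<rangle>\<close>, where
  \<open>d\<^sub>i\<close> certifies the \<open>i\<close>-th derivation in \<open>differs\<close>.\<close>

definition "Wm = FST (FST PFst)"
definition "Wv = FST (SND (FST PFst))"
definition "Ww = FST (SND (SND (FST PFst)))"
definition "Wef = SND (SND (SND (FST PFst)))"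
definition "Wd1 = FST (SND PFst)"
definition "Wd2 = FST (SND (SND PFst))"
definition "Wd3 = SND (SND (SND PFst))"

lemmas witness_fields = Wm_def Wv_def Ww_def Wef_def Wd1_def Wd2_def Wd3_def

definition "DIFFERS =
  ADD (DERIVES Wd1 (JUDG (PConst 0) (FST NUMERAL_LEVEL) (SND NUMERAL_LEVEL) (PConst 0) Wef))
  (ADD (DERIVES Wd2 (JUDG (PConst 0) APP_LEVEL Wef Wm Wv))
  (ADD (DERIVES Wd3 (JUDG (PConst 0) (PConst 0) (PConst (K2_code (const_pfun 0))) Wm Ww))
  (NZ (DIST Wv Ww))))"

lemma ex_eval_DIFFERS: "(\<exists>c. eval g DIFFERS (prod_encode (c, x)) = 0) \<longleftrightarrow> differs g (g 0)"
proof
  assume "\<exists>c. eval g DIFFERS (prod_encode (c, x)) = 0"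
  then obtain c where "eval g DIFFERS (prod_encode (c, x)) = 0" ..
  then show "differs g (g 0)"
    unfolding differs_def derivable_iff_certifies by (simp add: DIFFERS_def witness_fields) blast
next
  assume "differs g (g 0)"
  then obtain m v w ef d1 d2 d3 where
    "certifies g d1 (judg 0 (fst (numeral_level (g 0))) (snd (numeral_level (g 0))) 0 ef)"
    "certifies g d2 (judg 0 (app_level (g 0)) ef m v)"
    "certifies g d3 (judg 0 0 (K2_code (const_pfun 0)) m w)" "v \<noteq> w"
    unfolding differs_def derivable_iff_certifies by blast
  then have "eval g DIFFERS (prod_encode (prod_encode (prod_encode (m, prod_encode (v,
      prod_encode (w, ef))), prod_encode (d1, prod_encode (d2, d3))), x)) = 0"
    by (simp add: DIFFERS_def witness_fields)
  then show "\<exists>c. eval g DIFFERS (prod_encode (c, x)) = 0" ..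
qed

definition "diag_code = search_code DIFFERS"

definition diag_oracle :: "nat \<Rightarrow> nat" where
  "diag_oracle a = (if even a then diag_code else if a div 2 \<in> X then 1 else 0)"

lemma B_app_diag:
  "B_app (const_pfun diag_code) (chi X) =
    Some (if differs diag_oracle diag_code then const_pfun 0 else (\<lambda>_. None))"
proof -
  have join: "join (const_pfun diag_code) (chi X) = (\<lambda>a. Some (diag_oracle a))"
    by (simp add: fun_eq_iff join_def chi_def diag_oracle_def)
  have "Phi diag_code (\<lambda>a. Some (diag_oracle a)) x =
      (if differs diag_oracle (diag_oracle 0) then Some 0 else None)" for x
    unfolding diag_code_def Phi_search_code ex_eval_DIFFERS ..
  moreover have "diag_oracle 0 = diag_code"
    by (simp add: diag_oracle_def)
  ultimately show ?thesis
    by (simp add: B_app_def fun_eq_iff join)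
qed

theorem embedding_impossible: False
proof -
  define a where "a = (if differs diag_oracle diag_code then const_pfun 0 else (\<lambda>_. None))"
  have a_in: "a \<in> B_X X"
    by (simp add: a_def const_pfun_in_B_X nowhere_defined_in_B_X)
  have "K2_app (f (const_pfun diag_code)) (f (chi X)) = Some (f a)"
    using K2_app_f[OF const_pfun_in_B_X chi_in_B_X _ a_in] B_app_diag by (simp add: a_def)
  then have "differs diag_oracle diag_code \<longleftrightarrow> f a \<noteq> f (const_pfun 0)"
    by (rule differs_iff[rotated]) (simp add: diag_oracle_def)
  also have "\<dots> \<longleftrightarrow> a \<noteq> const_pfun 0"
    using inj_f a_in const_pfun_in_B_X by (auto dest: inj_onD)
  also have "\<dots> \<longleftrightarrow> \<not> differs diag_oracle diag_code"
    by (auto simp: a_def fun_eq_iff)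
  finally show False by blast
qed

end

theorem corollary6p16:
  fixes X :: "nat set"
  shows "\<not> (\<exists>f. pca_embedding (B_X X) (sub_app (B_X X) B_app)
                            (K2_X X) (sub_app (K2_X X) K2_app) f)"
proof
  assume "\<exists>f. pca_embedding (B_X X) (sub_app (B_X X) B_app) (K2_X X) (sub_app (K2_X X) K2_app) f"
  then obtain f where "B_K2_embedding X f"
    by (auto simp: B_K2_embedding_def)
  then show False
    by (rule B_K2_embedding.embedding_impossible)
qed

end
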